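(* Let $a(\lambda)\le b(\lambda)<c(\lambda)\le d(\lambda)$ be polynomials and let $W\le\mathbb{F}_2^{d}$ be a fixed subspace of dimension $c$. Sample $T\le W$ uniformly among subspaces of dimension $b$ and then $S\le T$ uniformly among subspaces of $T$ of dimension $a$. Let $\{\mathcal{O}_S\}_S$ be any family of classical oracles such that $\mathcal{O}_S(z)=\bot$ for all $z\notin S$, and let $\{\mathcal{O}_{S,T}\}_{S,T}$ be any family of classical oracles such that $\mathcal{O}_{S,T}(z)=\mathcal{O}_S(z)$ for $z\in S$ and $\mathcal{O}_{S,T}(z)=\bot$ for $z\notin T$. Let $U^{(\cdot)}$ be any efficient isometry making (polynomially many) superposition queries to a classical oracle. Define $|\psi_S\rangle:=U^{\mathcal{O}_S}|S\rangle$, $|\psi_T\rangle:=U^{\mathcal{O}_{S,T}}|S\rangle$ (where $|S\rangle$ is a classical description of $S$), and $$|\phi_S\rangle=\frac{1}{\sqrt{\binom{c}{b}_2\binom{b}{a}_2}}\sum_{S,T}|S,T\rangle|\psi_S\rangle,\qquad |\phi_T\rangle=\frac{1}{\sqrt{\binom{c}{b}_2\binom{b}{a}_2}}\sum_{S,T}|S,T\rangle|\psi_T\rangle,$$ where the sums range over all pairs $S\le T\le W$ with $\dim T=b$, $\dim S=a$. Then there is a polynomial $q(\lambda)$ (depending only on the number of oracle queries of $U$) such that $$\mathrm{TD}\big(|\phi_S\rangle\langle\phi_S|,\;|\phi_T\rangle\langle\phi_T|\big)\le \frac{q}{2^{(c-b)/2}}.$$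
   Context: $\binom{c}{b}_2$ denotes the Gaussian binomial coefficient (the number of $b$-dimensional subspaces of a $c$-dimensional $\mathbb{F}_2$-space). $\mathrm{TD}$ is trace distance. Oracles are accessed in quantum superposition via $|z\rangle|w\rangle\mapsto|z\rangle|w\oplus\mathcal{O}(z)\rangle$. *)

theory Defs
  imports Complex_Main "HOL-Computational_Algebra.Polynomial"
begin

(* F_2^d is modelled as subsets of {..<d}; vector addition is symmetric difference. *)
definition sdiff :: "nat set \<Rightarrow> nat set \<Rightarrow> nat set" where
  "sdiff x y = (x - y) \<union> (y - x)"

definition is_subspace :: "nat \<Rightarrow> nat set set \<Rightarrow> bool" where
  "is_subspace d V \<longleftrightarrow> V \<subseteq> Pow {..<d} \<and> {} \<in> V \<and> (\<forall>x\<in>V. \<forall>y\<in>V. sdiff x y \<in> V)"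

definition subspace_dim :: "nat \<Rightarrow> nat set set \<Rightarrow> nat \<Rightarrow> bool" where
  "subspace_dim d V k \<longleftrightarrow> is_subspace d V \<and> card V = 2 ^ k"

definition gbinom2 :: "nat \<Rightarrow> nat \<Rightarrow> real" where
  "gbinom2 n k = (\<Prod>i<k. (2 ^ (n - i) - 1)) / (\<Prod>i<k. (2 ^ (k - i) - 1))"

(* Basis states of the algorithm's register: query input z \<in> F_2^d,
   query output w \<in> F_2^m, workspace index in {..<k}. *)
type_synonym st = "nat set \<times> nat set \<times> nat"
type_synonym vec = "st \<Rightarrow> complex"

definition space :: "nat \<Rightarrow> nat \<Rightarrow> nat \<Rightarrow> st set" where
  "space d m k = Pow {..<d} \<times> Pow {..<m} \<times> {..<k}"

definition vinner :: "'s set \<Rightarrow> ('s \<Rightarrow> complex) \<Rightarrow> ('s \<Rightarrow> complex) \<Rightarrow> complex" where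
  "vinner X \<phi> \<chi> = (\<Sum>x\<in>X. cnj (\<phi> x) * \<chi> x)"

definition apply_mat :: "st set \<Rightarrow> (st \<Rightarrow> st \<Rightarrow> complex) \<Rightarrow> vec \<Rightarrow> vec" where
  "apply_mat X M \<psi> = (\<lambda>x. if x \<in> X then (\<Sum>y\<in>X. M x y * \<psi> y) else 0)"

definition unitary_on :: "st set \<Rightarrow> (st \<Rightarrow> st \<Rightarrow> complex) \<Rightarrow> bool" where
  "unitary_on X M \<longleftrightarrow> (\<forall>y\<in>X. \<forall>y'\<in>X. (\<Sum>x\<in>X. cnj (M x y) * M x y') = (if y = y' then 1 else 0))"

(* superposition query |z>|w>|a> \<mapsto> |z>|w \<oplus> O(z)>|a> *)
definition apply_oracle :: "(nat set \<Rightarrow> nat set) \<Rightarrow> vec \<Rightarrow> vec" where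
  "apply_oracle orc \<psi> = (\<lambda>(z, w, a). \<psi> (z, sdiff w (orc z), a))"

(* query algorithm: start state, then for each unitary U in the list: one oracle query followed by U.
   The number of queries is length Us. *)
definition run_alg :: "st set \<Rightarrow> (st \<Rightarrow> st \<Rightarrow> complex) list \<Rightarrow> (nat set \<Rightarrow> nat set) \<Rightarrow> vec \<Rightarrow> vec" where
  "run_alg X Us orc \<psi>0 = foldl (\<lambda>\<psi> U. apply_mat X U (apply_oracle orc \<psi>)) \<psi>0 Us"

(* trace distance between the pure states |phi><phi| and |chi><chi| (unit vectors) *)
definition td_pure :: "'s set \<Rightarrow> ('s \<Rightarrow> complex) \<Rightarrow> ('s \<Rightarrow> complex) \<Rightarrow> real" where
  "td_pure Y \<phi> \<chi> = sqrt (1 - (cmod (vinner Y \<phi> \<chi>))\<^sup>2)"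

end

theory Submission
  imports Defs "HOL-Analysis.L2_Norm" "HOL-Analysis.Convex"
begin

text \<open>The two algorithms differ only in their oracles, and \<open>O\<^sub>S\<close> and \<open>O\<^sub>S\<^sub>,\<^sub>T\<close> agree outside
  \<open>T - S\<close>. By the hybrid argument and Cauchy-Schwarz, the squared distance between the final
  states of a \<open>q\<close>-query algorithm is at most \<open>4q\<close> times the total amplitude mass that the
  intermediate states of the run with \<open>O\<^sub>S\<close> place on queries in \<open>T - S\<close>. These states do not
  depend on \<open>T\<close>, and a fixed vector outside \<open>S\<close> lies in at most a \<open>2^-(c - b)\<close> fraction of the
  \<open>b\<close>-dimensional \<open>T\<close> with \<open>S \<subseteq> T \<subseteq> W\<close>, so averaging over \<open>T\<close> costs a factor \<open>2^-(c - b)\<close>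
  per query. The superpositions are therefore at squared distance at most \<open>4q\<^sup>2 / 2^(c - b)\<close>,
  and the trace distance of pure states is at most their distance.\<close>

section \<open>Subspaces of F_2^d\<close>

lemma sdiff_self [simp]: "sdiff x x = {}"
  unfolding sdiff_def by auto

lemma sdiff_assoc: "sdiff (sdiff x y) z = sdiff x (sdiff y z)"
  unfolding sdiff_def by auto

lemma sdiff_left_commute: "sdiff x (sdiff y z) = sdiff y (sdiff x z)"
  unfolding sdiff_def by auto

lemma sdiff_cancel [simp]: "sdiff x (sdiff x y) = y" "sdiff (sdiff y x) x = y"
  unfolding sdiff_def by auto

lemma sdiff_left_cancel_iff [simp]: "sdiff v x = sdiff v y \<longleftrightarrow> x = y"
  unfolding sdiff_def by blast

lemma sdiff_subset: "x \<subseteq> A \<Longrightarrow> y \<subseteq> A \<Longrightarrow> sdiff x y \<subseteq> A"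
  unfolding sdiff_def by auto

lemma is_subspace_finite: "is_subspace d V \<Longrightarrow> finite V"
  unfolding is_subspace_def by (meson finite_Pow_iff finite_lessThan finite_subset)

lemma is_subspace_zero: "is_subspace d {{}}"
  unfolding is_subspace_def by auto

lemma subspace_dim_subset_eq:
  "subspace_dim d S k \<Longrightarrow> subspace_dim d T k \<Longrightarrow> S \<subseteq> T \<Longrightarrow> S = T"
  unfolding subspace_dim_def by (metis card_subset_eq is_subspace_finite)

definition adjoin :: "nat set set \<Rightarrow> nat set \<Rightarrow> nat set set" where
  "adjoin A v = A \<union> sdiff v ` A"

lemma mem_adjoin_iff: "x \<in> adjoin A v \<longleftrightarrow> x \<in> A \<or> sdiff v x \<in> A"
  unfolding adjoin_def by (auto intro: image_eqI[where x = "sdiff v x"])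

lemma subset_adjoin: "A \<subseteq> adjoin A v"
  unfolding adjoin_def by blast

lemma mem_adjoin: "is_subspace d A \<Longrightarrow> v \<in> adjoin A v"
  unfolding mem_adjoin_iff is_subspace_def by simp

lemma adjoin_subset: "is_subspace d T \<Longrightarrow> A \<subseteq> T \<Longrightarrow> v \<in> T \<Longrightarrow> adjoin A v \<subseteq> T"
  unfolding adjoin_def is_subspace_def by auto

lemma is_subspace_adjoin:
  assumes A: "is_subspace d A" and v: "v \<subseteq> {..<d}"
  shows "is_subspace d (adjoin A v)"
proof -
  have sub: "A \<subseteq> Pow {..<d}" and zero: "{} \<in> A"
    and closed: "\<And>x y. x \<in> A \<Longrightarrow> y \<in> A \<Longrightarrow> sdiff x y \<in> A"
    using A unfolding is_subspace_def by auto
  have "sdiff x y \<in> adjoin A v" if "x \<in> adjoin A v" "y \<in> adjoin A v" for x y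
    using that closed[of x y] closed[of "sdiff v x" y] closed[of x "sdiff v y"]
      closed[of "sdiff v x" "sdiff v y"]
    unfolding mem_adjoin_iff by (auto simp: sdiff_assoc sdiff_left_commute)
  moreover have "adjoin A v \<subseteq> Pow {..<d}"
    using sub sdiff_subset[OF v] unfolding adjoin_def by blast
  ultimately show ?thesis
    using zero subset_adjoin unfolding is_subspace_def by blast
qed

lemma card_adjoin:
  assumes A: "is_subspace d A" and v: "v \<notin> A"
  shows "card (adjoin A v) = 2 * card A"
proof -
  have "A \<inter> sdiff v ` A = {}"
  proof (rule ccontr)
    assume "A \<inter> sdiff v ` A \<noteq> {}"
    then obtain y where "y \<in> A" "sdiff v y \<in> A" by blast
    then have "sdiff (sdiff v y) y \<in> A" using A unfolding is_subspace_def by blast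
    then show False using v by simp
  qed
  moreover have "card (sdiff v ` A) = card A" by (simp add: card_image inj_on_def)
  ultimately show ?thesis
    unfolding adjoin_def using card_Un_disjoint is_subspace_finite[OF A] by fastforce
qed

section \<open>Counting subspaces\<close>

lemma card_mult_eq_by_double_counting:
  assumes "finite A" "finite B"
    and "\<And>a. a \<in> A \<Longrightarrow> card {b \<in> B. R a b} = r"
    and "\<And>b. b \<in> B \<Longrightarrow> card {a \<in> A. R a b} = s"
  shows "card A * r = card B * s"
proof -
  have "card A * r = (\<Sum>a\<in>A. \<Sum>b\<in>B. if R a b then 1 else 0)"
    using assms(1-3) by (simp add: sum.If_cases Int_def)
  also have "\<dots> = (\<Sum>b\<in>B. \<Sum>a\<in>A. if R a b then 1 else 0)"
    by (rule sum.swap)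
  also have "\<dots> = card B * s"
    using assms(1,2,4) by (simp add: sum.If_cases Int_def)
  finally show ?thesis .
qed

definition subspaces_between :: "nat \<Rightarrow> nat set set \<Rightarrow> nat set set \<Rightarrow> nat \<Rightarrow> nat set set set" where
  "subspaces_between d A W k = {T. subspace_dim d T k \<and> A \<subseteq> T \<and> T \<subseteq> W}"

lemma finite_subspaces_between: "is_subspace d W \<Longrightarrow> finite (subspaces_between d A W k)"
  unfolding subspaces_between_def
  by (rule finite_subset[of _ "Pow W"]) (auto dest: is_subspace_finite)

text \<open>Every \<open>T\<close> of dimension \<open>k + 1\<close> above \<open>A\<close> is \<open>adjoin A v\<close> for exactly the \<open>2^k\<close> vectors
  \<open>v \<in> T - A\<close>, so counting the pairs \<open>(v, T)\<close> gives \<open>2^k' - 2^k = 2^k * (number of T)\<close>.\<close>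

lemma card_subspaces_between_Suc:
  assumes A: "subspace_dim d A k" and W: "subspace_dim d W k'"
    and AW: "A \<subseteq> W" and "k < k'"
  shows "card (subspaces_between d A W (Suc k)) = 2 ^ (k' - k) - 1"
proof -
  let ?B = "subspaces_between d A W (Suc k)"
  have As: "is_subspace d A" "card A = 2 ^ k" and Ws: "is_subspace d W" "card W = 2 ^ k'"
    using A W unfolding subspace_dim_def by auto
  have adjoin_eq: "adjoin A v = T" if "T \<in> ?B" "v \<in> T - A" for T v
  proof -
    have T: "is_subspace d T" "card T = 2 ^ Suc k" "A \<subseteq> T"
      using that(1) unfolding subspaces_between_def subspace_dim_def by auto
    have "adjoin A v \<subseteq> T" using adjoin_subset[OF T(1,3)] that(2) by blast
    moreover have "card (adjoin A v) = card T" using card_adjoin[OF As(1)] that(2) As(2) T(2) by simp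
    ultimately show ?thesis using card_subset_eq is_subspace_finite[OF T(1)] by blast
  qed
  have adjoin_mem: "adjoin A v \<in> ?B" if "v \<in> W - A" for v
  proof -
    have "v \<subseteq> {..<d}" using that Ws(1) unfolding is_subspace_def by blast
    then show ?thesis
      using that is_subspace_adjoin[OF As(1)] card_adjoin[OF As(1)] As(2)
        subset_adjoin adjoin_subset[OF Ws(1) AW]
      unfolding subspaces_between_def subspace_dim_def by auto
  qed
  have "card (W - A) * 1 = card ?B * 2 ^ k"
  proof (rule card_mult_eq_by_double_counting[where R = "\<lambda>v T. adjoin A v = T"])
    show "card {T \<in> ?B. adjoin A v = T} = 1" if "v \<in> W - A" for v
    proof -
      have "{T \<in> ?B. adjoin A v = T} = {adjoin A v}" using adjoin_mem[OF that] by blast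
      then show ?thesis by simp
    qed
    show "card {v \<in> W - A. adjoin A v = T} = 2 ^ k" if T: "T \<in> ?B" for T
    proof -
      have "{v \<in> W - A. adjoin A v = T} = T - A"
        using adjoin_eq[OF T] mem_adjoin[OF As(1)] T unfolding subspaces_between_def by blast
      moreover have "card T = 2 ^ Suc k" "A \<subseteq> T"
        using T unfolding subspaces_between_def subspace_dim_def by auto
      ultimately show ?thesis using card_Diff_subset[OF is_subspace_finite[OF As(1)]] As(2) by simp
    qed
  qed (use finite_subspaces_between[OF Ws(1)] is_subspace_finite[OF Ws(1)] in auto)
  moreover have "card (W - A) = (2 ^ (k' - k) - 1) * 2 ^ k"
    using card_Diff_subset[OF is_subspace_finite[OF As(1)] AW] As(2) Ws(2) \<open>k < k'\<close>
    by (simp add: diff_mult_distrib power_add[symmetric])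
  ultimately show ?thesis by simp
qed

lemma gbinom2_alt: "gbinom2 n k = (\<Prod>i<k. (2 ^ (n - i) - 1)) / (\<Prod>i<k. (2 ^ Suc i - 1))"
proof -
  have "(\<Prod>i<k. (2 ^ (k - i) - 1 :: real)) = (\<Prod>i<k. (2 ^ Suc (k - Suc i) - 1))"
    by (rule prod.cong) (auto simp: Suc_diff_Suc)
  also have "\<dots> = (\<Prod>i<k. (2 ^ Suc i - 1))"
    by (rule prod.nat_diff_reindex)
  finally show ?thesis unfolding gbinom2_def by simp
qed

lemma two_power_minus_one_pos: "0 < n \<Longrightarrow> (0::real) < 2 ^ n - 1"
  by simp

lemma gbinom2_0 [simp]: "gbinom2 n 0 = 1"
  unfolding gbinom2_def by simp

lemma gbinom2_Suc: "gbinom2 n (Suc k) = gbinom2 n k * (2 ^ (n - k) - 1) / (2 ^ Suc k - 1)"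
  unfolding gbinom2_alt by simp

lemma gbinom2_Suc_Suc: "gbinom2 (Suc n) (Suc k) = gbinom2 n k * (2 ^ Suc n - 1) / (2 ^ Suc k - 1)"
proof -
  have "(\<Prod>i<Suc k. (2 ^ (Suc n - i) - 1 :: real)) = (2 ^ Suc n - 1) * (\<Prod>i<k. (2 ^ (n - i) - 1))"
    by (subst prod.lessThan_Suc_shift) simp
  then show ?thesis unfolding gbinom2_alt by simp
qed

lemma gbinom2_pos: "k \<le> n \<Longrightarrow> 0 < gbinom2 n k"
  unfolding gbinom2_alt by (intro divide_pos_pos prod_pos two_power_minus_one_pos) auto

lemma gbinom2_Suc_self: "gbinom2 (Suc k) k = 2 ^ Suc k - 1"
proof -
  have "gbinom2 (Suc k) (Suc k) = 1"
    unfolding gbinom2_def by (simp add: two_power_minus_one_pos prod_pos less_imp_neq[symmetric])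
  then show ?thesis
    unfolding gbinom2_Suc using two_power_minus_one_pos[of "Suc k"] by simp
qed

lemma gbinom2_mult_power_le:
  assumes "k \<le> n"
  shows "gbinom2 n k * 2 ^ (n - k) \<le> gbinom2 (Suc n) (Suc k)"
proof -
  have "(2::real) ^ (n - k) * (2 ^ Suc k - 1) = 2 ^ Suc n - 2 ^ (n - k)"
    using assms by (simp add: algebra_simps flip: power_add)
  then have "(2::real) ^ (n - k) * (2 ^ Suc k - 1) \<le> 2 ^ Suc n - 1"
    by simp
  then have "2 ^ (n - k) \<le> ((2::real) ^ Suc n - 1) / (2 ^ Suc k - 1)"
    using two_power_minus_one_pos[of "Suc k"] by (simp add: field_simps)
  then show ?thesis
    unfolding gbinom2_Suc_Suc using gbinom2_pos[OF assms]
    by (metis mult_left_mono less_eq_real_def times_divide_eq_right)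
qed

text \<open>Double counting the inclusions \<open>T' \<subseteq> T\<close> between the levels \<open>j + m\<close> and \<open>j + m + 1\<close> gives
  the recursion of \<open>gbinom2 n m\<close> in \<open>m\<close>.\<close>

lemma card_subspaces_between:
  assumes A: "subspace_dim d A j" and W: "subspace_dim d W (j + n)" and AW: "A \<subseteq> W" and "m \<le> n"
  shows "real (card (subspaces_between d A W (j + m))) = gbinom2 n m"
  using W AW \<open>m \<le> n\<close>
proof (induction m arbitrary: n W)
  case 0
  have "subspaces_between d A W j = {A}"
    using A 0 subspace_dim_subset_eq[OF A] unfolding subspaces_between_def by blast
  then show ?case by simp
next
  case (Suc m)
  let ?L = "subspaces_between d A W (j + m)"
  let ?B = "subspaces_between d A W (j + Suc m)"
  have Ws: "is_subspace d W" using Suc.prems(1) unfolding subspace_dim_def by simp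
  have "card ?L * (2 ^ (n - m) - 1) = card ?B * (2 ^ Suc m - 1)"
  proof (rule card_mult_eq_by_double_counting[where R = "(\<subseteq>)"])
    show "card {T \<in> ?B. T' \<subseteq> T} = 2 ^ (n - m) - 1" if T': "T' \<in> ?L" for T'
    proof -
      have "subspace_dim d T' (j + m)" "T' \<subseteq> W" "A \<subseteq> T'"
        using T' unfolding subspaces_between_def by auto
      moreover have "{T \<in> ?B. T' \<subseteq> T} = subspaces_between d T' W (Suc (j + m))"
        using \<open>A \<subseteq> T'\<close> unfolding subspaces_between_def by auto
      ultimately show ?thesis
        using card_subspaces_between_Suc[of d T' "j + m" W "j + n"] Suc.prems by simp
    qed
    show "card {T' \<in> ?L. T' \<subseteq> T} = 2 ^ Suc m - 1" if T: "T \<in> ?B" for T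
    proof -
      have "subspace_dim d T (j + Suc m)" "A \<subseteq> T" "T \<subseteq> W"
        using T unfolding subspaces_between_def by auto
      moreover have "{T' \<in> ?L. T' \<subseteq> T} = subspaces_between d A T (j + m)"
        using \<open>T \<subseteq> W\<close> unfolding subspaces_between_def by auto
      ultimately have "real (card {T' \<in> ?L. T' \<subseteq> T}) = 2 ^ Suc m - 1"
        using Suc.IH[of T "Suc m"] gbinom2_Suc_self by simp
      moreover have "real (2 ^ Suc m - 1 :: nat) = 2 ^ Suc m - 1"
        by simp
      ultimately show ?thesis by (metis of_nat_eq_iff)
    qed
  qed (use finite_subspaces_between[OF Ws] in auto)
  then have "real (card ?B * (2 ^ Suc m - 1)) = real (card ?L * (2 ^ (n - m) - 1))"
    by simp
  then have "real (card ?B) * (2 ^ Suc m - 1) = real (card ?L) * (2 ^ (n - m) - 1)"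
    by simp
  then have "real (card ?B) * (2 ^ Suc m - 1) = gbinom2 n m * (2 ^ (n - m) - 1)"
    using Suc by simp
  then show ?case
    unfolding gbinom2_Suc using two_power_minus_one_pos[of "Suc m"] by (simp add: field_simps)
qed

lemma card_subspaces_of:
  assumes "subspace_dim d W n" "k \<le> n"
  shows "real (card {T. subspace_dim d T k \<and> T \<subseteq> W}) = gbinom2 n k"
proof -
  have "{{}} \<subseteq> W" and zero: "subspace_dim d {{}} 0"
    using assms(1) is_subspace_zero unfolding subspace_dim_def is_subspace_def by auto
  moreover have "{T. subspace_dim d T k \<and> T \<subseteq> W} = subspaces_between d {{}} W (0 + k)"
    unfolding subspaces_between_def subspace_dim_def is_subspace_def by auto
  ultimately show ?thesis
    using card_subspaces_between[OF zero, of W n k] assms by simp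
qed

lemma card_nested_subspace_pairs:
  assumes W: "subspace_dim d W c" and "a \<le> b" "b \<le> c"
  shows "real (card {(S, T). subspace_dim d S a \<and> subspace_dim d T b \<and> S \<subseteq> T \<and> T \<subseteq> W})
           = gbinom2 c b * gbinom2 b a"
proof -
  let ?Ts = "{T. subspace_dim d T b \<and> T \<subseteq> W}"
  let ?Ss = "\<lambda>T. {S. subspace_dim d S a \<and> S \<subseteq> T}"
  have "{(S, T). subspace_dim d S a \<and> subspace_dim d T b \<and> S \<subseteq> T \<and> T \<subseteq> W}
      = prod.swap ` (SIGMA T:?Ts. ?Ss T)"
    by auto
  then have "card {(S, T). subspace_dim d S a \<and> subspace_dim d T b \<and> S \<subseteq> T \<and> T \<subseteq> W}
      = card (SIGMA T:?Ts. ?Ss T)"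
    by (simp add: card_image)
  also have "\<dots> = (\<Sum>T\<in>?Ts. card (?Ss T))"
  proof (rule card_SigmaI)
    have "finite (subspaces_between d {} W b)"
      using W finite_subspaces_between unfolding subspace_dim_def by blast
    then show "finite ?Ts" unfolding subspaces_between_def by simp
    have "finite (subspaces_between d {} T a)" if "T \<in> ?Ts" for T
      using that finite_subspaces_between unfolding subspace_dim_def by blast
    then show "\<forall>T\<in>?Ts. finite (?Ss T)" unfolding subspaces_between_def by simp
  qed
  finally have "real (card {(S, T). subspace_dim d S a \<and> subspace_dim d T b \<and> S \<subseteq> T \<and> T \<subseteq> W})
      = (\<Sum>T\<in>?Ts. real (card (?Ss T)))"
    by simp
  also have "\<dots> = (\<Sum>T\<in>?Ts. gbinom2 b a)"
    using card_subspaces_of \<open>a \<le> b\<close> by (intro sum.cong) auto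
  finally show ?thesis
    using card_subspaces_of[OF W \<open>b \<le> c\<close>] by simp
qed

text \<open>For \<open>z \<in> W - S\<close> the \<open>T\<close> containing \<open>z\<close> are exactly those containing \<open>adjoin S z\<close>, so
  both counts are Gaussian binomials, with parameters \<open>(c - a, b - a)\<close> and \<open>(c - a - 1, b - a - 1)\<close>.\<close>

lemma card_subspaces_between_containing_le:
  assumes W: "subspace_dim d W c" and S: "subspace_dim d S a" "S \<subseteq> W" and "a \<le> b" "b \<le> c"
  shows "real (card {T \<in> subspaces_between d S W b. z \<in> T - S}) * 2 ^ (c - b)
           \<le> real (card (subspaces_between d S W b))"
proof (cases "z \<in> W - S \<and> a < b")
  case False
  have empty: "{T \<in> subspaces_between d S W b. z \<in> T - S} = {}"
  proof -
    have False if T: "T \<in> subspaces_between d S W b" and z: "z \<in> T - S" for T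
    proof -
      have "subspace_dim d T b" "S \<subseteq> T" "T \<subseteq> W"
        using T unfolding subspaces_between_def by auto
      moreover have "a = b" using False z \<open>T \<subseteq> W\<close> \<open>a \<le> b\<close> by auto
      ultimately have "S = T" using subspace_dim_subset_eq[OF S(1)] by simp
      then show False using z by simp
    qed
    then show ?thesis by blast
  qed
  show ?thesis unfolding empty by simp
next
  case True
  have Ss: "is_subspace d S" "card S = 2 ^ a" and Ws: "is_subspace d W"
    using S W unfolding subspace_dim_def by auto
  have "z \<subseteq> {..<d}" using True Ws unfolding is_subspace_def by blast
  then have S': "subspace_dim d (adjoin S z) (Suc a)" "adjoin S z \<subseteq> W"
    using True is_subspace_adjoin[OF Ss(1)] card_adjoin[OF Ss(1)] Ss(2) adjoin_subset[OF Ws S(2)]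
    unfolding subspace_dim_def by auto
  have "{T \<in> subspaces_between d S W b. z \<in> T - S} = subspaces_between d (adjoin S z) W b"
    using True adjoin_subset[of d _ S z] mem_adjoin[OF Ss(1), of z] subset_adjoin[of S z]
    unfolding subspaces_between_def subspace_dim_def by auto
  then have "real (card {T \<in> subspaces_between d S W b. z \<in> T - S})
      = gbinom2 (c - Suc a) (b - Suc a)"
    using card_subspaces_between[OF S'(1), of W "c - Suc a" "b - Suc a"] W S'(2) True \<open>b \<le> c\<close>
    by simp
  moreover have "real (card (subspaces_between d S W b)) = gbinom2 (Suc (c - Suc a)) (Suc (b - Suc a))"
    using card_subspaces_between[OF S(1), of W "c - a" "b - a"] W S(2) True \<open>b \<le> c\<close>
    by (simp add: Suc_diff_Suc)
  ultimately show ?thesis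
    using gbinom2_mult_power_le[of "b - Suc a" "c - Suc a"] True \<open>b \<le> c\<close> by simp
qed

section \<open>Query algorithms and the hybrid argument\<close>

definition sqnorm :: "'s set \<Rightarrow> ('s \<Rightarrow> complex) \<Rightarrow> real" where
  "sqnorm X \<psi> = (\<Sum>x\<in>X. (cmod (\<psi> x))\<^sup>2)"

definition vnorm :: "'s set \<Rightarrow> ('s \<Rightarrow> complex) \<Rightarrow> real" where
  "vnorm X \<psi> = sqrt (sqnorm X \<psi>)"

definition query_mass :: "st set \<Rightarrow> nat set set \<Rightarrow> vec \<Rightarrow> real" where
  "query_mass X D \<psi> = (\<Sum>x\<in>X. if fst x \<in> D then (cmod (\<psi> x))\<^sup>2 else 0)"

lemma sqnorm_nonneg: "0 \<le> sqnorm X \<psi>"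
  unfolding sqnorm_def by (simp add: sum_nonneg)

lemma vnorm_nonneg: "0 \<le> vnorm X \<psi>"
  unfolding vnorm_def by (simp add: sqnorm_nonneg)

lemma sqnorm_eq_vnorm_square: "sqnorm X \<psi> = (vnorm X \<psi>)\<^sup>2"
  unfolding vnorm_def by (simp add: sqnorm_nonneg)

lemma query_mass_nonneg: "0 \<le> query_mass X D \<psi>"
  unfolding query_mass_def by (simp add: sum_nonneg)

lemma vnorm_triangle: "vnorm X (\<lambda>x. \<phi> x + \<chi> x) \<le> vnorm X \<phi> + vnorm X \<chi>"
proof -
  have vnorm_L2: "vnorm X \<psi> = L2_set (\<lambda>x. cmod (\<psi> x)) X" for \<psi>
    unfolding vnorm_def sqnorm_def L2_set_def ..
  have "L2_set (\<lambda>x. cmod (\<phi> x + \<chi> x)) X \<le> L2_set (\<lambda>x. cmod (\<phi> x) + cmod (\<chi> x)) X"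
    by (rule L2_set_mono) (auto simp: norm_triangle_ineq)
  also have "\<dots> \<le> L2_set (\<lambda>x. cmod (\<phi> x)) X + L2_set (\<lambda>x. cmod (\<chi> x)) X"
    by (rule L2_set_triangle_ineq)
  finally show ?thesis unfolding vnorm_L2 .
qed

lemma vinner_self: "vinner X \<psi> \<psi> = complex_of_real (sqnorm X \<psi>)"
proof -
  have "complex_of_real ((cmod z)\<^sup>2) = cnj z * z" for z
    using complex_norm_square by (simp add: mult.commute)
  then show ?thesis unfolding vinner_def sqnorm_def of_real_sum by simp
qed

lemma sqnorm_apply_mat:
  assumes fin: "finite X" and U: "unitary_on X U"
  shows "sqnorm X (apply_mat X U \<psi>) = sqnorm X \<psi>"
proof -
  have "complex_of_real (sqnorm X (apply_mat X U \<psi>))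
      = (\<Sum>x\<in>X. cnj (\<Sum>y\<in>X. U x y * \<psi> y) * (\<Sum>y\<in>X. U x y * \<psi> y))"
    unfolding vinner_self[symmetric] vinner_def apply_mat_def by simp
  also have "\<dots> = (\<Sum>x\<in>X. \<Sum>y\<in>X. \<Sum>y'\<in>X. (cnj (U x y) * U x y') * (cnj (\<psi> y) * \<psi> y'))"
    by (simp add: sum_distrib_left sum_distrib_right mult_ac)
  also have "\<dots> = (\<Sum>y\<in>X. \<Sum>x\<in>X. \<Sum>y'\<in>X. (cnj (U x y) * U x y') * (cnj (\<psi> y) * \<psi> y'))"
    by (rule sum.swap)
  also have "\<dots> = (\<Sum>y\<in>X. \<Sum>y'\<in>X. (\<Sum>x\<in>X. cnj (U x y) * U x y') * (cnj (\<psi> y) * \<psi> y'))"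
    by (intro sum.cong refl sum.swap[THEN trans]) (simp add: sum_distrib_right)
  also have "\<dots> = (\<Sum>y\<in>X. \<Sum>y'\<in>X. (if y = y' then cnj (\<psi> y) * \<psi> y' else 0))"
    using U unfolding unitary_on_def by (intro sum.cong refl) simp
  also have "\<dots> = (\<Sum>y\<in>X. cnj (\<psi> y) * \<psi> y)"
    using fin by simp
  also have "\<dots> = complex_of_real (sqnorm X \<psi>)"
    unfolding vinner_self[symmetric] vinner_def ..
  finally show ?thesis by simp
qed

lemma apply_mat_diff:
  "apply_mat X U (\<lambda>x. \<phi> x - \<chi> x) = (\<lambda>x. apply_mat X U \<phi> x - apply_mat X U \<chi> x)"
  unfolding apply_mat_def by (auto simp: sum_subtractf right_diff_distrib)

definition query_shift :: "(nat set \<Rightarrow> nat set) \<Rightarrow> st \<Rightarrow> st" where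
  "query_shift orc = (\<lambda>(z, w, a). (z, sdiff w (orc z), a))"

definition oracle_on :: "nat \<Rightarrow> nat \<Rightarrow> (nat set \<Rightarrow> nat set) \<Rightarrow> bool" where
  "oracle_on d m orc \<longleftrightarrow> (\<forall>z\<in>Pow {..<d}. orc z \<subseteq> {..<m})"

lemma apply_oracle_eq: "apply_oracle orc \<psi> x = \<psi> (query_shift orc x)"
  unfolding apply_oracle_def query_shift_def by (simp add: case_prod_beta)

lemma apply_oracle_diff:
  "apply_oracle orc (\<lambda>x. \<phi> x - \<chi> x) = (\<lambda>x. apply_oracle orc \<phi> x - apply_oracle orc \<chi> x)"
  unfolding apply_oracle_eq ..

lemma query_shift_query_shift [simp]: "query_shift orc (query_shift orc x) = x"
  unfolding query_shift_def by (auto simp: sdiff_assoc split: prod.splits)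

lemma query_shift_in_space:
  assumes "oracle_on d m orc" "x \<in> space d m k"
  shows "query_shift orc x \<in> space d m k"
proof (cases x)
  case (fields z w a)
  then have "z \<subseteq> {..<d}" "w \<subseteq> {..<m}" "a < k"
    using assms(2) unfolding space_def by auto
  then show ?thesis
    using assms(1) sdiff_subset[of w "{..<m}" "orc z"]
    unfolding fields oracle_on_def space_def query_shift_def by auto
qed

lemma sum_space_query_shift:
  assumes "oracle_on d m orc"
  shows "(\<Sum>x\<in>space d m k. f (query_shift orc x)) = (\<Sum>x\<in>space d m k. f x)"
  by (rule sum.reindex_bij_witness[where i = "query_shift orc" and j = "query_shift orc"])
    (use query_shift_in_space[OF assms] in auto)

lemma sqnorm_apply_oracle:
  "oracle_on d m orc \<Longrightarrow> sqnorm (space d m k) (apply_oracle orc \<psi>) = sqnorm (space d m k) \<psi>"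
  unfolding sqnorm_def apply_oracle_eq by (rule sum_space_query_shift)

lemma cmod_diff_square_le: "(cmod (u - v))\<^sup>2 \<le> 2 * (cmod u)\<^sup>2 + 2 * (cmod v)\<^sup>2"
proof -
  have "(cmod (u - v))\<^sup>2 \<le> (cmod u + cmod v)\<^sup>2"
    by (rule power_mono[OF norm_triangle_ineq4 norm_ge_zero])
  also have "\<dots> \<le> 2 * (cmod u)\<^sup>2 + 2 * (cmod v)\<^sup>2"
    using zero_le_power2[of "cmod u - cmod v"] unfolding power2_sum power2_diff by linarith
  finally show ?thesis .
qed

lemma sqnorm_apply_oracle_diff_le:
  assumes o1: "oracle_on d m o1" and o2: "oracle_on d m o2"
    and agree: "\<And>z. z \<subseteq> {..<d} \<Longrightarrow> z \<notin> D \<Longrightarrow> o1 z = o2 z"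
  shows "sqnorm (space d m k) (\<lambda>x. apply_oracle o1 \<psi> x - apply_oracle o2 \<psi> x)
           \<le> 4 * query_mass (space d m k) D \<psi>"
proof -
  let ?X = "space d m k"
  let ?g = "\<lambda>y. if fst y \<in> D then (cmod (\<psi> y))\<^sup>2 else 0"
  have pointwise: "(cmod (\<psi> (query_shift o1 x) - \<psi> (query_shift o2 x)))\<^sup>2
      \<le> 2 * ?g (query_shift o1 x) + 2 * ?g (query_shift o2 x)" if x: "x \<in> ?X" for x
  proof (cases "fst x \<in> D")
    case True
    moreover have "fst (query_shift orc x) = fst x" for orc
      unfolding query_shift_def by (simp add: case_prod_beta)
    ultimately show ?thesis using cmod_diff_square_le by simp
  next
    case False
    then have "query_shift o1 x = query_shift o2 x"
      using x agree unfolding space_def query_shift_def by (auto split: prod.splits)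
    then show ?thesis by simp
  qed
  have "sqnorm ?X (\<lambda>x. apply_oracle o1 \<psi> x - apply_oracle o2 \<psi> x)
      \<le> (\<Sum>x\<in>?X. 2 * ?g (query_shift o1 x) + 2 * ?g (query_shift o2 x))"
    unfolding sqnorm_def apply_oracle_eq by (rule sum_mono) (rule pointwise)
  also have "\<dots> = 2 * (\<Sum>x\<in>?X. ?g (query_shift o1 x)) + 2 * (\<Sum>x\<in>?X. ?g (query_shift o2 x))"
    by (simp add: sum.distrib sum_distrib_left)
  also have "\<dots> = 4 * query_mass ?X D \<psi>"
    unfolding query_mass_def
    using sum_space_query_shift[OF o1, of ?g] sum_space_query_shift[OF o2, of ?g] by simp
  finally show ?thesis .
qed

lemma run_alg_Nil [simp]: "run_alg X [] orc \<psi> = \<psi>"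
  unfolding run_alg_def by simp

lemma run_alg_Cons [simp]:
  "run_alg X (U # Us) orc \<psi> = run_alg X Us orc (apply_mat X U (apply_oracle orc \<psi>))"
  unfolding run_alg_def by simp

lemma finite_space: "finite (space d m k)"
  unfolding space_def by simp

lemma sqnorm_run_alg:
  assumes "oracle_on d m orc" "\<forall>U\<in>set Us. unitary_on (space d m k) U"
  shows "sqnorm (space d m k) (run_alg (space d m k) Us orc \<psi>) = sqnorm (space d m k) \<psi>"
  using assms(2)
  by (induction Us arbitrary: \<psi>)
    (simp_all add: sqnorm_apply_mat[OF finite_space] sqnorm_apply_oracle[OF assms(1)])

text \<open>The hybrid argument: unitaries and queries preserve distances, and in each query the two
  oracles move a state apart by at most twice the root of its query mass on the set \<open>D\<close> where
  they differ.\<close>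

lemma vnorm_run_alg_diff_le:
  assumes o1: "oracle_on d m o1" and o2: "oracle_on d m o2"
    and agree: "\<And>z. z \<subseteq> {..<d} \<Longrightarrow> z \<notin> D \<Longrightarrow> o1 z = o2 z"
    and "\<forall>U\<in>set Us. unitary_on (space d m k) U"
  shows "vnorm (space d m k) (\<lambda>x. run_alg (space d m k) Us o1 \<phi> x - run_alg (space d m k) Us o2 \<chi> x)
     \<le> vnorm (space d m k) (\<lambda>x. \<phi> x - \<chi> x)
        + (\<Sum>i<length Us. 2 * sqrt (query_mass (space d m k) D (run_alg (space d m k) (take i Us) o1 \<phi>)))"
  using assms(4)
proof (induction Us arbitrary: \<phi> \<chi>)
  case Nil
  then show ?case by simp
next
  case (Cons U Us)
  let ?X = "space d m k"
  define \<phi>' where "\<phi>' = apply_mat ?X U (apply_oracle o1 \<phi>)"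
  define \<chi>' where "\<chi>' = apply_mat ?X U (apply_oracle o2 \<chi>)"
  have U: "unitary_on ?X U" using Cons.prems by simp
  have "vnorm ?X (\<lambda>x. \<phi>' x - \<chi>' x) = vnorm ?X (\<lambda>x. apply_oracle o1 \<phi> x - apply_oracle o2 \<chi> x)"
    unfolding \<phi>'_def \<chi>'_def vnorm_def apply_mat_diff[symmetric]
    using sqnorm_apply_mat[OF finite_space U] by simp
  also have "(\<lambda>x. apply_oracle o1 \<phi> x - apply_oracle o2 \<chi> x)
     = (\<lambda>x. (apply_oracle o1 \<phi> x - apply_oracle o2 \<phi> x) + apply_oracle o2 (\<lambda>x. \<phi> x - \<chi> x) x)"
    unfolding apply_oracle_diff by simp
  also have "vnorm ?X \<dots> \<le> vnorm ?X (\<lambda>x. apply_oracle o1 \<phi> x - apply_oracle o2 \<phi> x)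
      + vnorm ?X (apply_oracle o2 (\<lambda>x. \<phi> x - \<chi> x))"
    by (rule vnorm_triangle)
  also have "vnorm ?X (apply_oracle o2 (\<lambda>x. \<phi> x - \<chi> x)) = vnorm ?X (\<lambda>x. \<phi> x - \<chi> x)"
    unfolding vnorm_def using sqnorm_apply_oracle[OF o2] by simp
  also have "vnorm ?X (\<lambda>x. apply_oracle o1 \<phi> x - apply_oracle o2 \<phi> x) \<le> sqrt (4 * query_mass ?X D \<phi>)"
    unfolding vnorm_def using sqnorm_apply_oracle_diff_le[OF o1 o2 agree] real_sqrt_le_mono by blast
  also have "sqrt (4 * query_mass ?X D \<phi>) = 2 * sqrt (query_mass ?X D \<phi>)"
    by (simp add: real_sqrt_mult)
  finally have "vnorm ?X (\<lambda>x. \<phi>' x - \<chi>' x) \<le> 2 * sqrt (query_mass ?X D \<phi>) + vnorm ?X (\<lambda>x. \<phi> x - \<chi> x)"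
    by simp
  moreover have "(\<Sum>i<length (U # Us). 2 * sqrt (query_mass ?X D (run_alg ?X (take i (U # Us)) o1 \<phi>)))
     = 2 * sqrt (query_mass ?X D \<phi>) + (\<Sum>i<length Us. 2 * sqrt (query_mass ?X D (run_alg ?X (take i Us) o1 \<phi>')))"
    unfolding \<phi>'_def by (simp add: sum.lessThan_Suc_shift del: sum.lessThan_Suc)
  ultimately show ?case
    using Cons.IH[of \<phi>' \<chi>'] Cons.prems unfolding \<phi>'_def \<chi>'_def by simp
qed

lemma sqnorm_run_alg_diff_le:
  assumes o1: "oracle_on d m o1" and o2: "oracle_on d m o2"
    and agree: "\<And>z. z \<subseteq> {..<d} \<Longrightarrow> z \<notin> D \<Longrightarrow> o1 z = o2 z"
    and "\<forall>U\<in>set Us. unitary_on (space d m k) U"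
  shows "sqnorm (space d m k) (\<lambda>x. run_alg (space d m k) Us o1 \<psi> x - run_alg (space d m k) Us o2 \<psi> x)
     \<le> 4 * real (length Us)
        * (\<Sum>i<length Us. query_mass (space d m k) D (run_alg (space d m k) (take i Us) o1 \<psi>))"
proof -
  let ?X = "space d m k" and ?L = "length Us"
  let ?q = "\<lambda>i. query_mass ?X D (run_alg ?X (take i Us) o1 \<psi>)"
  let ?\<delta> = "\<lambda>x. run_alg ?X Us o1 \<psi> x - run_alg ?X Us o2 \<psi> x"
  have "vnorm ?X (\<lambda>x. \<psi> x - \<psi> x) = 0"
    by (simp add: vnorm_def sqnorm_def)
  then have "vnorm ?X ?\<delta> \<le> (\<Sum>i<?L. 2 * sqrt (?q i))"
    using vnorm_run_alg_diff_le[OF assms, where \<phi> = \<psi> and \<chi> = \<psi>] by simp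
  then have "sqnorm ?X ?\<delta> \<le> (\<Sum>i<?L. 2 * sqrt (?q i))\<^sup>2"
    unfolding sqnorm_eq_vnorm_square by (rule power_mono[OF _ vnorm_nonneg])
  also have "\<dots> \<le> (\<Sum>i<?L. (2 * sqrt (?q i))\<^sup>2) * ?L"
    by (metis card_lessThan sum_squared_le_sum_of_squares)
  also have "\<dots> = 4 * real ?L * (\<Sum>i<?L. ?q i)"
    using query_mass_nonneg by (simp add: power_mult_distrib sum_distrib_left mult_ac)
  finally show ?thesis .
qed

lemma td_pure_le_vnorm_diff:
  assumes "sqnorm Y \<phi> = 1" "sqnorm Y \<chi> = 1"
  shows "td_pure Y \<phi> \<chi> \<le> vnorm Y (\<lambda>y. \<phi> y - \<chi> y)"
proof -
  let ?r = "Re (vinner Y \<phi> \<chi>)"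
  have "(cmod (u - v))\<^sup>2 = (cmod u)\<^sup>2 + (cmod v)\<^sup>2 - 2 * Re (cnj u * v)" for u v
    by (simp add: cmod_power2 power2_diff algebra_simps)
  then have "sqnorm Y (\<lambda>y. \<phi> y - \<chi> y) = sqnorm Y \<phi> + sqnorm Y \<chi> - 2 * ?r"
    unfolding sqnorm_def vinner_def by (simp add: sum.distrib sum_subtractf sum_distrib_left)
  then have dist: "sqnorm Y (\<lambda>y. \<phi> y - \<chi> y) = 2 - 2 * ?r"
    using assms by simp
  have "?r\<^sup>2 \<le> (cmod (vinner Y \<phi> \<chi>))\<^sup>2"
    using abs_Re_le_cmod by (metis abs_ge_zero power2_abs power_mono)
  moreover have "0 \<le> (1 - ?r)\<^sup>2" by simp
  ultimately have "1 - (cmod (vinner Y \<phi> \<chi>))\<^sup>2 \<le> 2 - 2 * ?r"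
    by (simp add: power2_diff)
  then show ?thesis unfolding td_pure_def vnorm_def dist by (rule real_sqrt_le_mono)
qed

section \<open>Averaging over the nested pairs\<close>

lemma sum_query_mass_subspaces_between_le:
  assumes W: "subspace_dim d W c" and S: "subspace_dim d S a" "S \<subseteq> W" and "a \<le> b" "b \<le> c"
  shows "(\<Sum>T\<in>subspaces_between d S W b. query_mass X (T - S) \<psi>) * 2 ^ (c - b)
           \<le> real (card (subspaces_between d S W b)) * sqnorm X \<psi>"
proof -
  let ?B = "subspaces_between d S W b"
  have "finite ?B"
    using W finite_subspaces_between unfolding subspace_dim_def by blast
  have "(\<Sum>T\<in>?B. query_mass X (T - S) \<psi>)
      = (\<Sum>x\<in>X. \<Sum>T\<in>?B. if fst x \<in> T - S then (cmod (\<psi> x))\<^sup>2 else 0)"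
    unfolding query_mass_def by (rule sum.swap)
  also have "\<dots> = (\<Sum>x\<in>X. (cmod (\<psi> x))\<^sup>2 * real (card {T \<in> ?B. fst x \<in> T - S}))"
    using \<open>finite ?B\<close> by (intro sum.cong refl) (simp add: sum.If_cases Int_def)
  finally have "(\<Sum>T\<in>?B. query_mass X (T - S) \<psi>) * 2 ^ (c - b)
      = (\<Sum>x\<in>X. (cmod (\<psi> x))\<^sup>2 * (real (card {T \<in> ?B. fst x \<in> T - S}) * 2 ^ (c - b)))"
    by (simp add: sum_distrib_right mult.assoc)
  also have "\<dots> \<le> (\<Sum>x\<in>X. (cmod (\<psi> x))\<^sup>2 * real (card ?B))"
    using card_subspaces_between_containing_le[OF assms] by (intro sum_mono mult_left_mono) auto
  also have "\<dots> = real (card ?B) * sqnorm X \<psi>"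
    unfolding sqnorm_def sum_distrib_left by (simp add: mult.commute)
  finally show ?thesis .
qed

lemma sum_query_mass_nested_pairs_le:
  assumes W: "subspace_dim d W c" and "a \<le> b" "b \<le> c"
    and unit: "\<And>S. subspace_dim d S a \<Longrightarrow> sqnorm X (\<psi> S) = 1"
  shows "(\<Sum>(S, T)\<in>{(S, T). subspace_dim d S a \<and> subspace_dim d T b \<and> S \<subseteq> T \<and> T \<subseteq> W}.
            query_mass X (T - S) (\<psi> S)) * 2 ^ (c - b)
           \<le> gbinom2 c b * gbinom2 b a"
proof -
  let ?P = "{(S, T). subspace_dim d S a \<and> subspace_dim d T b \<and> S \<subseteq> T \<and> T \<subseteq> W}"
  let ?Ss = "{S. subspace_dim d S a \<and> S \<subseteq> W}"
  let ?B = "\<lambda>S. subspaces_between d S W b"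
  have P: "?P = Sigma ?Ss ?B"
    unfolding subspaces_between_def by auto
  have Ws: "is_subspace d W" using W unfolding subspace_dim_def by simp
  have fin: "finite ?Ss" "\<forall>S\<in>?Ss. finite (?B S)"
    using finite_subspaces_between[OF Ws, of "{}" a] finite_subspaces_between[OF Ws]
    unfolding subspaces_between_def by simp_all
  have "(\<Sum>(S, T)\<in>?P. query_mass X (T - S) (\<psi> S)) * 2 ^ (c - b)
      = (\<Sum>S\<in>?Ss. (\<Sum>T\<in>?B S. query_mass X (T - S) (\<psi> S)) * 2 ^ (c - b))"
    unfolding P sum.Sigma[OF fin, symmetric] sum_distrib_right by simp
  also have "\<dots> \<le> (\<Sum>S\<in>?Ss. real (card (?B S)))"
  proof (rule sum_mono)
    fix S assume "S \<in> ?Ss"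
    then show "(\<Sum>T\<in>?B S. query_mass X (T - S) (\<psi> S)) * 2 ^ (c - b) \<le> real (card (?B S))"
      using sum_query_mass_subspaces_between_le[OF W _ _ assms(2,3), of S X "\<psi> S"] unit[of S] by simp
  qed
  also have "\<dots> = real (card ?P)"
    unfolding P card_SigmaI[OF fin] by simp
  finally show ?thesis
    using card_nested_subspace_pairs[OF assms(1-3)] by simp
qed

definition superposition ::
  "('a \<times> 'b) set \<Rightarrow> real \<Rightarrow> ('a \<Rightarrow> 'b \<Rightarrow> 's \<Rightarrow> complex) \<Rightarrow> ('a \<times> 'b) \<times> 's \<Rightarrow> complex" where
  "superposition P N F = (\<lambda>((S, T), x). if (S, T) \<in> P then F S T x / complex_of_real (sqrt N) else 0)"

lemma superposition_diff:
  "(\<lambda>y. superposition P N F y - superposition P N G y)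
     = superposition P N (\<lambda>S T x. F S T x - G S T x)"
  unfolding superposition_def by (auto simp: diff_divide_distrib)

lemma sqnorm_superposition:
  assumes "0 \<le> N"
  shows "sqnorm (P \<times> X) (superposition P N F) = (\<Sum>(S, T)\<in>P. sqnorm X (F S T)) / N"
proof -
  have "sqnorm (P \<times> X) (superposition P N F) = (\<Sum>(S, T)\<in>P. \<Sum>x\<in>X. (cmod (F S T x))\<^sup>2 / N)"
    unfolding sqnorm_def sum.cartesian_product'
    by (intro sum.cong refl) (auto simp: superposition_def norm_divide power_divide assms)
  then show ?thesis
    unfolding sqnorm_def by (simp add: sum_divide_distrib case_prod_beta)
qed

lemma sqnorm_superposition_eq_1:
  assumes "real (card P) = N" "0 < N" and unit: "\<And>S T. (S, T) \<in> P \<Longrightarrow> sqnorm X (F S T) = 1"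
  shows "sqnorm (P \<times> X) (superposition P N F) = 1"
  using assms unit by (simp add: sqnorm_superposition case_prod_beta)

locale nested_subspace_oracles =
  fixes d m k a b c :: nat and W :: "nat set set"
    and OS :: "nat set set \<Rightarrow> nat set \<Rightarrow> nat set"
    and OST :: "nat set set \<Rightarrow> nat set set \<Rightarrow> nat set \<Rightarrow> nat set"
    and bot :: "nat set" and V0 :: "nat set set \<Rightarrow> vec" and Us :: "(st \<Rightarrow> st \<Rightarrow> complex) list"
  assumes a_le_b: "a \<le> b" and b_less_c: "b < c" and W: "subspace_dim d W c"
    and OS_range: "\<And>S z. subspace_dim d S a \<Longrightarrow> z \<subseteq> {..<d} \<Longrightarrow> OS S z \<subseteq> {..<m}"
    and OS_outside: "\<And>S z. subspace_dim d S a \<Longrightarrow> z \<subseteq> {..<d} \<Longrightarrow> z \<notin> S \<Longrightarrow> OS S z = bot"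
    and OST: "\<And>S T z. subspace_dim d S a \<Longrightarrow> subspace_dim d T b \<Longrightarrow> S \<subseteq> T \<Longrightarrow> T \<subseteq> W \<Longrightarrow>
      z \<subseteq> {..<d} \<Longrightarrow> OST S T z \<subseteq> {..<m} \<and> (z \<in> S \<longrightarrow> OST S T z = OS S z) \<and> (z \<notin> T \<longrightarrow> OST S T z = bot)"
    and V0_unit: "\<And>S. subspace_dim d S a \<Longrightarrow> sqnorm (space d m k) (V0 S) = 1"
    and unitary: "\<forall>U\<in>set Us. unitary_on (space d m k) U"
begin

definition pairs :: "(nat set set \<times> nat set set) set" where
  "pairs = {(S, T). subspace_dim d S a \<and> subspace_dim d T b \<and> S \<subseteq> T \<and> T \<subseteq> W}"

abbreviation N :: real where
  "N \<equiv> gbinom2 c b * gbinom2 b a"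

lemma card_pairs: "real (card pairs) = N"
  unfolding pairs_def using card_nested_subspace_pairs[OF W a_le_b] b_less_c by simp

lemma N_pos: "0 < N"
  using gbinom2_pos a_le_b b_less_c by simp

lemma oracle_on_OS: "subspace_dim d S a \<Longrightarrow> oracle_on d m (OS S)"
  unfolding oracle_on_def using OS_range by blast

lemma oracle_on_OST: "(S, T) \<in> pairs \<Longrightarrow> oracle_on d m (OST S T)"
  unfolding oracle_on_def pairs_def using OST by simp

lemma OS_eq_OST:
  assumes "(S, T) \<in> pairs" "z \<subseteq> {..<d}" "z \<notin> T - S"
  shows "OS S z = OST S T z"
proof -
  have S: "subspace_dim d S a" and T: "subspace_dim d T b" "S \<subseteq> T" "T \<subseteq> W"
    using assms(1) unfolding pairs_def by auto
  show ?thesis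
  proof (cases "z \<in> S")
    case True
    then show ?thesis using OST[OF S T assms(2)] by simp
  next
    case False
    then show ?thesis using OST[OF S T assms(2)] OS_outside[OF S assms(2)] assms(3) by simp
  qed
qed

lemma sqnorm_run_alg_OS_OST_le:
  assumes "(S, T) \<in> pairs"
  shows "sqnorm (space d m k)
           (\<lambda>x. run_alg (space d m k) Us (OS S) (V0 S) x - run_alg (space d m k) Us (OST S T) (V0 S) x)
         \<le> 4 * real (length Us) * (\<Sum>i<length Us.
             query_mass (space d m k) (T - S) (run_alg (space d m k) (take i Us) (OS S) (V0 S)))"
proof -
  have "subspace_dim d S a" using assms unfolding pairs_def by simp
  then show ?thesis
    by (rule sqnorm_run_alg_diff_le[OF oracle_on_OS oracle_on_OST[OF assms] OS_eq_OST[OF assms] unitary])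
qed

lemma sqnorm_superposition_diff_le:
  "sqnorm (pairs \<times> space d m k)
     (\<lambda>y. superposition pairs N (\<lambda>S T. run_alg (space d m k) Us (OS S) (V0 S)) y
          - superposition pairs N (\<lambda>S T. run_alg (space d m k) Us (OST S T) (V0 S)) y)
   \<le> 4 * (real (length Us))\<^sup>2 / 2 ^ (c - b)"
proof -
  let ?X = "space d m k" and ?L = "length Us"
  let ?q = "\<lambda>i S T. query_mass ?X (T - S) (run_alg ?X (take i Us) (OS S) (V0 S))"
  have "sqnorm (pairs \<times> ?X)
     (\<lambda>y. superposition pairs N (\<lambda>S T. run_alg ?X Us (OS S) (V0 S)) y
          - superposition pairs N (\<lambda>S T. run_alg ?X Us (OST S T) (V0 S)) y)
    = (\<Sum>(S, T)\<in>pairs. sqnorm ?X (\<lambda>x. run_alg ?X Us (OS S) (V0 S) x - run_alg ?X Us (OST S T) (V0 S) x)) / N"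
    unfolding superposition_diff using N_pos by (simp add: sqnorm_superposition)
  also have "\<dots> \<le> (\<Sum>(S, T)\<in>pairs. 4 * real ?L * (\<Sum>i<?L. ?q i S T)) / N"
    using sqnorm_run_alg_OS_OST_le N_pos
    by (intro divide_right_mono sum_mono) (auto simp: case_prod_beta)
  also have "\<dots> = 4 * real ?L * (\<Sum>i<?L. \<Sum>(S, T)\<in>pairs. ?q i S T) / N"
    by (subst sum.swap) (simp add: sum_distrib_left case_prod_beta)
  also have "\<dots> \<le> 4 * real ?L * (\<Sum>i<?L. N / 2 ^ (c - b)) / N"
  proof -
    have "(\<Sum>(S, T)\<in>pairs. ?q i S T) * 2 ^ (c - b) \<le> N" for i
      unfolding pairs_def
    proof (rule sum_query_mass_nested_pairs_le[OF W a_le_b])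
      have "\<forall>U\<in>set (take i Us). unitary_on ?X U"
        using unitary by (meson in_set_takeD)
      then show "sqnorm ?X (run_alg ?X (take i Us) (OS S) (V0 S)) = 1" if "subspace_dim d S a" for S
        using sqnorm_run_alg[OF oracle_on_OS[OF that]] V0_unit[OF that] by simp
    qed (use b_less_c in simp)
    then have "(\<Sum>(S, T)\<in>pairs. ?q i S T) \<le> N / 2 ^ (c - b)" for i
      by (simp add: pos_le_divide_eq)
    then show ?thesis
      using N_pos by (intro divide_right_mono mult_left_mono sum_mono) auto
  qed
  also have "\<dots> = 4 * (real ?L)\<^sup>2 / 2 ^ (c - b)"
    using gbinom2_pos[OF a_le_b] gbinom2_pos[of b c] b_less_c by (simp add: power2_eq_square)
  finally show ?thesis .
qed

lemma td_pure_superposition_le: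
  "td_pure (pairs \<times> space d m k)
     (superposition pairs N (\<lambda>S T. run_alg (space d m k) Us (OS S) (V0 S)))
     (superposition pairs N (\<lambda>S T. run_alg (space d m k) Us (OST S T) (V0 S)))
   \<le> 2 * real (length Us) / 2 powr ((real c - real b) / 2)"
proof -
  let ?X = "space d m k"
  have "sqnorm ?X (run_alg ?X Us (OS S) (V0 S)) = 1" "sqnorm ?X (run_alg ?X Us (OST S T) (V0 S)) = 1"
    if ST: "(S, T) \<in> pairs" for S T
  proof -
    have S: "subspace_dim d S a" using ST unfolding pairs_def by simp
    show "sqnorm ?X (run_alg ?X Us (OS S) (V0 S)) = 1"
      using sqnorm_run_alg[OF oracle_on_OS[OF S] unitary] V0_unit[OF S] by simp
    show "sqnorm ?X (run_alg ?X Us (OST S T) (V0 S)) = 1"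
      using sqnorm_run_alg[OF oracle_on_OST[OF ST] unitary] V0_unit[OF S] by simp
  qed
  then have "td_pure (pairs \<times> ?X)
      (superposition pairs N (\<lambda>S T. run_alg ?X Us (OS S) (V0 S)))
      (superposition pairs N (\<lambda>S T. run_alg ?X Us (OST S T) (V0 S)))
    \<le> vnorm (pairs \<times> ?X)
      (\<lambda>y. superposition pairs N (\<lambda>S T. run_alg ?X Us (OS S) (V0 S)) y
          - superposition pairs N (\<lambda>S T. run_alg ?X Us (OST S T) (V0 S)) y)"
    by (intro td_pure_le_vnorm_diff sqnorm_superposition_eq_1[OF card_pairs N_pos])
  also have "\<dots> \<le> sqrt (4 * (real (length Us))\<^sup>2 / 2 ^ (c - b))"
    unfolding vnorm_def by (rule real_sqrt_le_mono[OF sqnorm_superposition_diff_le])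
  also have "\<dots> = 2 * real (length Us) / sqrt (2 ^ (c - b))"
    by (simp add: real_sqrt_divide real_sqrt_mult)
  also have "sqrt (2 ^ (c - b)) = 2 powr ((real c - real b) / 2)"
  proof -
    have "(2::real) powr (real (c - b) / 2) = sqrt (2 powr real (c - b))"
      by (rule powr_half_sqrt_powr) simp
    also have "(2::real) powr real (c - b) = 2 ^ (c - b)"
      by (rule powr_realpow) simp
    finally show ?thesis
      using b_less_c by simp
  qed
  finally show ?thesis .
qed

end

theorem mainTheorem1:
  "\<exists>q :: real poly. \<forall>d m k a b c W OS OST bot V0 Us.
     (let X = space d m k;
          P = {(S, T). subspace_dim d S a \<and> subspace_dim d T b \<and> S \<subseteq> T \<and> T \<subseteq> W};
          N = gbinom2 c b * gbinom2 b a;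
          phiS = (\<lambda>((S, T), x). if (S, T) \<in> P
                     then run_alg X Us (OS S) (V0 S) x / complex_of_real (sqrt N) else 0);
          phiT = (\<lambda>((S, T), x). if (S, T) \<in> P
                     then run_alg X Us (OST S T) (V0 S) x / complex_of_real (sqrt N) else 0)
      in (a \<le> b \<and> b < c \<and> c \<le> d \<and> subspace_dim d W c
          \<and> bot \<subseteq> {..<m}
          \<and> (\<forall>S. subspace_dim d S a \<longrightarrow> (\<forall>z\<in>Pow {..<d}.
                 OS S z \<subseteq> {..<m} \<and> (z \<notin> S \<longrightarrow> OS S z = bot)))
          \<and> (\<forall>(S, T)\<in>P. \<forall>z\<in>Pow {..<d}.
                 OST S T z \<subseteq> {..<m} \<and> (z \<in> S \<longrightarrow> OST S T z = OS S z)
                 \<and> (z \<notin> T \<longrightarrow> OST S T z = bot))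
          \<and> (\<forall>S. subspace_dim d S a \<longrightarrow> (\<forall>x. x \<notin> X \<longrightarrow> V0 S x = 0))
          \<and> (\<forall>S S'. subspace_dim d S a \<longrightarrow> subspace_dim d S' a \<longrightarrow>
                 vinner X (V0 S) (V0 S') = (if S = S' then 1 else 0))
          \<and> (\<forall>U\<in>set Us. unitary_on X U))
         \<longrightarrow> td_pure (P \<times> X) phiS phiT
               \<le> poly q (real (length Us)) / 2 powr ((real c - real b) / 2))"
  apply (rule exI[of _ "[:0, 2:]"], intro allI, unfold Let_def, intro impI, elim conjE)
  subgoal premises H for d m k a b c W OS OST bot V0 Us
  proof -
    have "sqnorm (space d m k) (V0 S) = 1" if "subspace_dim d S a" for S
    proof -
      have "vinner (space d m k) (V0 S) (V0 S) = 1" using H that by simp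
      then show ?thesis unfolding vinner_self by simp
    qed
    then interpret nested_subspace_oracles d m k a b c W OS OST bot V0 Us
      by unfold_locales (use H in auto)
    show ?thesis
      using td_pure_superposition_le unfolding superposition_def pairs_def by (simp add: mult.commute)
  qed
  done

end
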